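(* Consider the Weakener algorithm (described in the context) for $n \ge 3$ processes $p_0,\dots,p_{n-1}$. If the registers $R_1[j]$, $R_2[j]$, $C_1[j]$ ($j \ge 0$) used by the algorithm are linearizable but not strongly linearizable, then a strong adversary can construct a run of the algorithm in which all the processes execute infinitely many rounds, and therefore never reach a return statement.
   Context: Model: an asynchronous shared-memory system of $n\ge 3$ processes $p_0,\dots,p_{n-1}$ that may fail by crashing. A process is correct if it takes infinitely many steps. After returning from the algorithm, a process takes no-op steps forever. A strong adversary is a scheduler that sees the entire history so far, including the results of all coin flips made so far, and chooses adaptively which process takes the next step. A "linearizable [strongly linearizable] register" means an implemented register whose implementation is linearizable [strongly linearizable]. Linearizability: every operation appears to take effect instantaneously at some point between its invocation and its response, i.e., each history has a linearization (a sequential history consistent with the real-time order of non-overlapping operations and with the sequential specification). Strong linearizability: a set of histories $\mathcal{H}$ is strongly linearizable if there is a function $f$ from the prefix-closure of $\mathcal{H}$ to sequential histories such that (L) for every $H$ in the prefix-closure, $f(H)$ is a linearization of $H$, and (P) whenever $G$ is a prefix of $H$ (both in the prefix-closure), $f(G)$ is a prefix of $f(H)$. Weakener algorithm. Shared registers, for each $j = 0,1,2,\dots$: $R_1[j]$, a multi-writer multi-reader register initialized to $\bot$; $C_1[j]$, a register written only by $p_0$, initialized to $-1$; $R_2[j]$, a register initialized to $\textsc{false}$. Code of $p_i$ for $i \in \{0,1\}$: for rounds $j=0,1,2,\dots$: (Phase 1) write $i$ into $R_1[j]$; if $i=0$, flip a fair coin (outcome in $\{0,1\}$) and write the outcome into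 $C_1[j]$; (Phase 2) read $R_2[j]$ into local variable $v_1$; if $v_1 = \textsc{false}$, exit the for loop. After the loop: return. Code of $p_i$ for $i \in \{2,\dots,n-1\}$: for rounds $j=0,1,2,\dots$: (Phase 1) read $R_1[j]$ into $u_1$; read $R_1[j]$ into $u_2$; read $C_1[j]$ into $c_1$; if $u_1 \ne c_1$ or $u_2 \ne 1-c_1$, exit the for loop; (Phase 2) write $\textsc{true}$ into $R_2[j]$. After the loop: return. *)

theory Defs
  imports Main
begin

text \<open>Register values: bottom, integers (R1, C1) and booleans (R2).\<close>
datatype val = Bot | VI int | VB bool

datatype reg = R1 nat | C1 nat | R2 nat

fun init_val :: "reg \<Rightarrow> val" where
  "init_val (R1 j) = Bot"
| "init_val (C1 j) = VI (-1)"
| "init_val (R2 j) = VB False"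

datatype rop = Rd | Wr val

text \<open>Events of a run: invocation / response of a register operation by a process,
  a coin flip (with its outcome) by a process, and a no-op step (after return).\<close>
datatype event = Inv nat reg rop | Resp nat reg val | Flip nat bool | NoOp nat

fun proc :: "event \<Rightarrow> nat" where
  "proc (Inv p r op) = p" | "proc (Resp p r v) = p" | "proc (Flip p b) = p" | "proc (NoOp p) = p"

fun is_flip :: "event \<Rightarrow> bool" where
  "is_flip (Flip p b) = True" | "is_flip _ = False"

fun is_inv_on :: "reg \<Rightarrow> event \<Rightarrow> bool" where
  "is_inv_on r (Inv p r' op) = (r' = r)" | "is_inv_on r _ = False"

fun is_read_inv :: "event \<Rightarrow> bool" where
  "is_read_inv (Inv p r Rd) = True" | "is_read_inv _ = False"

fun resp_val :: "event \<Rightarrow> val" where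
  "resp_val (Resp p r v) = v" | "resp_val _ = Bot"

definition matches :: "event list \<Rightarrow> nat \<Rightarrow> nat \<Rightarrow> bool" where
  "matches h i j \<longleftrightarrow> i < j \<and> j < length h \<and>
     (\<exists>p r op v. h!i = Inv p r op \<and> h!j = Resp p r v \<and>
        (\<forall>k. i < k \<and> k < j \<longrightarrow> proc (h!k) \<noteq> p))"

definition cur_val :: "event list \<Rightarrow> val \<Rightarrow> nat list \<Rightarrow> val" where
  "cur_val h v0 xs = foldl (\<lambda>v i. case h!i of Inv p r (Wr w) \<Rightarrow> w | _ \<Rightarrow> v) v0 xs"

text \<open>Linearizability of the sub-history of register r (initial value v0) in h:
  there is a sequential order L of a set of operations (identified by their
  invocation index) containing all completed operations (pending operations may
  be completed or dropped) that respects real-time order and in which every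
  completed read returns the value of the latest preceding write (or v0).\<close>
definition linearizable_reg :: "event list \<Rightarrow> reg \<Rightarrow> val \<Rightarrow> bool" where
  "linearizable_reg h r v0 \<longleftrightarrow> (\<exists>L.
     distinct L \<and>
     (\<forall>i\<in>set L. i < length h \<and> is_inv_on r (h!i)) \<and>
     (\<forall>i j. matches h i j \<and> is_inv_on r (h!i) \<longrightarrow> i \<in> set L) \<and>
     (\<forall>x < length L. \<forall>y < length L. (\<exists>j. matches h (L!x) j \<and> j < L!y) \<longrightarrow> x < y) \<and>
     (\<forall>k < length L. \<forall>j. matches h (L!k) j \<and> is_read_inv (h!(L!k)) \<longrightarrow>
         resp_val (h!j) = cur_val h v0 (take k L)))"

text \<open>Program counters. P* for p0,p1; Q* for p2..p(n-1); *w = awaiting response.\<close>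
datatype pc = PW1 | PW1w | PFlip | PWC | PWCw | PR2 | PR2w
  | QR1a | QR1aw | QR1b | QR1bw | QC | QCw | QW2 | QW2w | Done

record lstate =
  rnd :: nat
  pcv :: pc
  u1 :: val
  u2 :: val
  cv :: val

fun one_minus :: "val \<Rightarrow> val" where
  "one_minus (VI k) = VI (1 - k)" | "one_minus _ = VB True"

definition init_state :: "nat \<Rightarrow> lstate" where
  "init_state p = \<lparr>rnd = 0, pcv = (if p < 2 then PW1 else QR1a), u1 = Bot, u2 = Bot, cv = Bot\<rparr>"

text \<open>One step of process p in local state s. v is the value returned if the step is a
  read response (chosen by the adversary, constrained by linearizability);
  b is the outcome of the coin if the step is a coin flip.\<close>
definition pstep :: "nat \<Rightarrow> lstate \<Rightarrow> val \<Rightarrow> bool \<Rightarrow> event \<times> lstate" where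
  "pstep p s v b = (let j = rnd s in case pcv s of
     PW1 \<Rightarrow> (Inv p (R1 j) (Wr (VI (int p))), s\<lparr>pcv := PW1w\<rparr>)
   | PW1w \<Rightarrow> (Resp p (R1 j) Bot, s\<lparr>pcv := (if p = 0 then PFlip else PR2)\<rparr>)
   | PFlip \<Rightarrow> (Flip p b, s\<lparr>pcv := PWC, cv := VI (if b then 1 else 0)\<rparr>)
   | PWC \<Rightarrow> (Inv p (C1 j) (Wr (cv s)), s\<lparr>pcv := PWCw\<rparr>)
   | PWCw \<Rightarrow> (Resp p (C1 j) Bot, s\<lparr>pcv := PR2\<rparr>)
   | PR2 \<Rightarrow> (Inv p (R2 j) Rd, s\<lparr>pcv := PR2w\<rparr>)
   | PR2w \<Rightarrow> (Resp p (R2 j) v,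
        if v = VB False then s\<lparr>pcv := Done\<rparr> else s\<lparr>rnd := j + 1, pcv := PW1\<rparr>)
   | QR1a \<Rightarrow> (Inv p (R1 j) Rd, s\<lparr>pcv := QR1aw\<rparr>)
   | QR1aw \<Rightarrow> (Resp p (R1 j) v, s\<lparr>u1 := v, pcv := QR1b\<rparr>)
   | QR1b \<Rightarrow> (Inv p (R1 j) Rd, s\<lparr>pcv := QR1bw\<rparr>)
   | QR1bw \<Rightarrow> (Resp p (R1 j) v, s\<lparr>u2 := v, pcv := QC\<rparr>)
   | QC \<Rightarrow> (Inv p (C1 j) Rd, s\<lparr>pcv := QCw\<rparr>)
   | QCw \<Rightarrow> (Resp p (C1 j) v,
        if u1 s \<noteq> v \<or> u2 s \<noteq> one_minus v then s\<lparr>cv := v, pcv := Done\<rparr>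
        else s\<lparr>cv := v, pcv := QW2\<rparr>)
   | QW2 \<Rightarrow> (Inv p (R2 j) (Wr (VB True)), s\<lparr>pcv := QW2w\<rparr>)
   | QW2w \<Rightarrow> (Resp p (R2 j) Bot, s\<lparr>rnd := j + 1, pcv := QR1a\<rparr>)
   | Done \<Rightarrow> (NoOp p, s))"

text \<open>A strong adversary is a function from the history so far (including all coin
  outcomes) to the next process to step and the value to return if that step is a
  read response. cs m is the outcome of the m-th coin flip of the run.\<close>
type_synonym adversary = "event list \<Rightarrow> nat \<times> val"

fun run :: "adversary \<Rightarrow> (nat \<Rightarrow> bool) \<Rightarrow> nat \<Rightarrow> (nat \<Rightarrow> lstate) \<times> event list" where
  "run \<sigma> cs 0 = (init_state, [])"
| "run \<sigma> cs (Suc k) = (let (st, h) = run \<sigma> cs k; (p, v) = \<sigma> h;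
     (e, s') = pstep p (st p) v (cs (length (filter is_flip h)))
   in (st(p := s'), h @ [e]))"

end

theory Submission
  imports Defs
begin

text \<open>
  With m = n - 2 readers p2, ..., p(m+1), the adversary runs every round j on the
  same pattern. p1 and p0 invoke their writes of 1 and 0 to R1[j] and every reader
  invokes its first read of R1[j]; then p0 completes its write, flips the coin c and writes it
  to C1[j]. Only now, knowing c, does the adversary fix the linearization of R1[j]: the write
  of c, all first reads, the write of 1 - c, all second reads. This is legal because both writes
  and all first reads were pending together, and it is exactly what strong linearizability
  forbids. So every reader reads c, then 1 - c, then c from C1[j], writes true into R2[j] and
  proceeds; finally p1 completes its write and p1, p0 read true from R2[j] and
  proceed as well.
\<close>

section \<open>Linearizing a prefix of an infinite history\<close>

definition val_after :: "(nat \<Rightarrow> event) \<Rightarrow> val \<Rightarrow> nat list \<Rightarrow> val" where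
  "val_after H v0 xs = foldl (\<lambda>v i. case H i of Inv p r (Wr w) \<Rightarrow> w | _ \<Rightarrow> v) v0 xs"

definition legal_order :: "(nat \<Rightarrow> event) \<Rightarrow> (nat \<Rightarrow> nat) \<Rightarrow> val \<Rightarrow> nat list \<Rightarrow> bool" where
  "legal_order H resp v0 L \<longleftrightarrow>
     (\<forall>x < length L. is_read_inv (H (L ! x)) \<longrightarrow>
        resp_val (H (resp (L ! x))) = val_after H v0 (take x L))"

lemma val_after_append [simp]: "val_after H v (xs @ ys) = val_after H (val_after H v xs) ys"
  by (simp add: val_after_def)

lemma val_after_cong: "\<forall>i\<in>set xs. H i = G i \<Longrightarrow> val_after H v xs = val_after G v xs"
  unfolding val_after_def by (rule foldl_cong) auto

lemma val_after_map: "val_after H v (map f xs) = val_after (H \<circ> f) v xs"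
  by (simp add: val_after_def foldl_map)

lemma cur_val_eq_val_after:
  "\<forall>i\<in>set xs. i < k \<Longrightarrow> cur_val (map H [0..<k]) v xs = val_after H v xs"
  unfolding cur_val_def val_after_def by (rule foldl_cong) auto

lemma val_after_reads: "\<forall>i\<in>set xs. is_read_inv (H i) \<Longrightarrow> val_after H v xs = v"
  unfolding val_after_def
proof (induction xs arbitrary: v)
  case (Cons i xs)
  then show ?case by (cases "H i" rule: is_read_inv.cases) auto
qed simp

lemma val_after_writes:
  "\<forall>i\<in>set xs. \<exists>p r. H i = Inv p r (Wr w) \<Longrightarrow> xs \<noteq> [] \<Longrightarrow> val_after H v xs = w"
proof (induction xs arbitrary: v)
  case (Cons i xs)
  then show ?case by (cases xs) (auto simp: val_after_def)
qed simp

lemma legal_order_append: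
  assumes "legal_order H resp v xs" and "legal_order H resp (val_after H v xs) ys"
  shows "legal_order H resp v (xs @ ys)"
  unfolding legal_order_def
proof (intro allI impI)
  fix x assume "x < length (xs @ ys)" and "is_read_inv (H ((xs @ ys) ! x))"
  then show "resp_val (H (resp ((xs @ ys) ! x))) = val_after H v (take x (xs @ ys))"
    using assms unfolding legal_order_def
    by (cases "x < length xs") (auto simp: nth_append)
qed

lemma legal_order_write_reads:
  assumes writes: "\<forall>i\<in>set ws. \<exists>p r. H i = Inv p r (Wr w)" and "ws \<noteq> []"
    and reads: "\<forall>i\<in>set rs. is_read_inv (H i) \<and> resp_val (H (resp i)) = w"
  shows "legal_order H resp v (ws @ rs)" and "val_after H v (ws @ rs) = w"
proof -
  have ws: "val_after H v ws = w" using writes \<open>ws \<noteq> []\<close> by (rule val_after_writes)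
  have rs: "val_after H w (take x rs) = w" for x
    using reads by (intro val_after_reads) (auto dest: in_set_takeD)
  show "val_after H v (ws @ rs) = w" using ws rs[of "length rs"] by simp
  show "legal_order H resp v (ws @ rs)"
    unfolding legal_order_def
  proof (intro allI impI)
    fix x assume x: "x < length (ws @ rs)" and read: "is_read_inv (H ((ws @ rs) ! x))"
    have "\<not> x < length ws"
    proof
      assume "x < length ws"
      then obtain p r where "H (ws ! x) = Inv p r (Wr w)" using writes by (meson nth_mem)
      with read \<open>x < length ws\<close> show False by (simp add: nth_append)
    qed
    with x have "(ws @ rs) ! x \<in> set rs" by (simp add: nth_append)
    with \<open>\<not> x < length ws\<close>
    show "resp_val (H (resp ((ws @ rs) ! x))) = val_after H v (take x (ws @ rs))"
      using reads ws rs by (simp add: nth_append)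
  qed
qed

lemma legal_order_map:
  assumes "\<forall>t\<in>set xs. H (f t) = G t \<and> H (resp (f t)) = G (resp' t)"
  shows "legal_order H resp v (map f xs) \<longleftrightarrow> legal_order G resp' v xs"
proof -
  have "val_after H v (take x (map f xs)) = val_after G v (take x xs)" for x
    using assms by (auto simp: take_map val_after_map intro!: val_after_cong dest: in_set_takeD)
  then show ?thesis using assms by (auto simp: legal_order_def)
qed

lemma is_inv_onD: "is_inv_on r e \<Longrightarrow> \<exists>p op. e = Inv p r op"
  by (cases e) auto

lemma matches_eq_next_step:
  assumes "matches (map H [0..<k]) a y" and "a < z" and "proc (H z) = proc (H a)"
    and idle: "\<forall>x. a < x \<and> x < z \<longrightarrow> proc (H x) \<noteq> proc (H a)"
  shows "y = z"
proof -
  from assms(1) obtain p r op v where y: "a < y" "y < k" "H a = Inv p r op" "H y = Resp p r v"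
    and between: "\<forall>x. a < x \<and> x < y \<longrightarrow> proc (H x) \<noteq> p"
    unfolding matches_def by auto
  show ?thesis
  proof (rule linorder_cases[of y z])
    assume "y < z"
    then show ?thesis using idle y by auto
  next
    assume "z < y"
    then show ?thesis using between y assms(2,3) by auto
  qed
qed

lemma filter_prefix_unchanged:
  assumes "x < length xs" and "\<forall>y\<in>set (take (Suc x) xs). P y"
  shows "x < length (filter P xs)" and "filter P xs ! x = xs ! x"
    and "take x (filter P xs) = take x xs"
proof -
  have "filter P xs = take (Suc x) xs @ filter P (drop (Suc x) xs)"
    using assms(2) by (metis append_take_drop_id filter_append filter_True)
  then show "x < length (filter P xs)" "filter P xs ! x = xs ! x" "take x (filter P xs) = take x xs"
    using assms(1) by (simp_all add: nth_append)
qed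

lemma real_time_order:
  assumes sorted: "sorted_wrt (\<lambda>u w. u < resp w) L" and "\<forall>w\<in>set L. w < resp w"
    and "\<forall>a\<in>set L. \<forall>y. matches h a y \<longrightarrow> y = resp a"
  shows "\<forall>x < length L. \<forall>y < length L. (\<exists>j. matches h (L ! x) j \<and> j < L ! y) \<longrightarrow> x < y"
proof (intro allI impI)
  fix x y j assume x: "x < length L" and y: "y < length L" and "\<exists>j. matches h (L ! x) j \<and> j < L ! y"
  with assms(3) have "resp (L ! x) < L ! y" by auto
  moreover have "L ! y < resp (L ! x)" if "y \<le> x"
    using that sorted assms(2) x y by (cases "y = x") (auto simp: sorted_wrt_iff_nth_less)
  ultimately show "x < y" by (meson leI less_asym)
qed

lemma linearizable_reg_prefixI:
  assumes distinct: "distinct L"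
    and invs: "\<forall>i\<in>set L. is_inv_on r (H i)"
    and complete: "\<forall>i. is_inv_on r (H i) \<longrightarrow> i \<in> set L"
    and sorted: "sorted_wrt (\<lambda>u w. u < resp w) L"
    and resp_after: "\<forall>w\<in>set L. w < resp w"
    and resp: "\<forall>a\<in>set L. \<forall>y. matches (map H [0..<k]) a y \<longrightarrow> y = resp a"
    and legal: "legal_order H resp v0 L"
  shows "linearizable_reg (map H [0..<k]) r v0"
proof -
  define h where "h = map H [0..<k]"
  define L' where "L' = filter (\<lambda>i. i < k) L"
  have h: "\<And>i. i < k \<Longrightarrow> h ! i = H i" "length h = k" unfolding h_def by simp_all
  have L': "set L' \<subseteq> set L" unfolding L'_def by auto
  have distinct': "distinct L'" using distinct unfolding L'_def by simp
  have in_range: "\<forall>i\<in>set L'. i < length h \<and> is_inv_on r (h ! i)"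
    using invs h unfolding L'_def by auto
  have complete': "\<forall>i j. matches h i j \<and> is_inv_on r (h ! i) \<longrightarrow> i \<in> set L'"
  proof (intro allI impI)
    fix i j assume "matches h i j \<and> is_inv_on r (h ! i)"
    moreover from this have "i < k" using h(2) unfolding matches_def by auto
    ultimately show "i \<in> set L'" using complete h(1) unfolding L'_def by auto
  qed
  have real_time: "\<forall>x < length L'. \<forall>y < length L'. (\<exists>j. matches h (L' ! x) j \<and> j < L' ! y) \<longrightarrow> x < y"
    using L' sorted resp_after resp unfolding L'_def h_def
    by (intro real_time_order[where resp = resp]) (auto simp: sorted_wrt_filter)
  have read_values: "\<forall>x < length L'. \<forall>j. matches h (L' ! x) j \<and> is_read_inv (h ! (L' ! x)) \<longrightarrow>
      resp_val (h ! j) = cur_val h v0 (take x L')"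
  proof (intro allI impI)
    fix x j assume x: "x < length L'" and read: "matches h (L' ! x) j \<and> is_read_inv (h ! (L' ! x))"
    obtain x0 where x0: "x0 < length L" "L ! x0 = L' ! x"
      using x L' by (metis in_set_conv_nth nth_mem subsetD)
    have "matches (map H [0..<k]) (L ! x0) j" using read x0(2) unfolding h_def by simp
    then have j: "j = resp (L ! x0)" "j < k" "L ! x0 < j"
      using resp x0(1) unfolding matches_def by auto
    have early: "\<forall>y\<in>set (take (Suc x0) L). y < k"
    proof
      fix y assume "y \<in> set (take (Suc x0) L)"
      then obtain i where "i \<le> x0" "y = L ! i"
        using x0 by (auto simp: in_set_conv_nth less_Suc_eq_le)
      show "y < k"
      proof (cases "i = x0")
        case False
        with \<open>i \<le> x0\<close> have "L ! i < resp (L ! x0)"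
          using sorted x0(1) by (simp add: sorted_wrt_iff_nth_less)
        with j \<open>y = L ! i\<close> show ?thesis by simp
      qed (use j \<open>y = L ! i\<close> in simp)
    qed
    note prefix = filter_prefix_unchanged[OF x0(1) early, folded L'_def]
    have "x = x0"
      using prefix(1,2) x x0(2) distinct unfolding L'_def by (simp add: nth_eq_iff_index_eq)
    have "cur_val h v0 (take x0 L) = val_after H v0 (take x0 L)"
      unfolding h_def using early set_take_subset_set_take[of x0 "Suc x0" L]
      by (intro cur_val_eq_val_after) auto
    moreover have "is_read_inv (H (L ! x0))" using read x0(2) j h(1) by simp
    ultimately show "resp_val (h ! j) = cur_val h v0 (take x L')"
      using legal x0(1) j h(1) prefix(3) \<open>x = x0\<close> unfolding legal_order_def by simp
  qed
  show ?thesis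
    unfolding linearizable_reg_def h_def[symmetric]
    using distinct' in_range complete' real_time read_values by blast
qed

section \<open>The schedule of one round\<close>

definition round_len :: "nat \<Rightarrow> nat" where
  "round_len m = 8 * m + 11"

definition reader_events :: "nat \<Rightarrow> bool \<Rightarrow> nat \<Rightarrow> event list" where
  "reader_events j c q =
     [Resp q (R1 j) (VI (of_bool c)), Inv q (R1 j) Rd, Resp q (R1 j) (VI (1 - of_bool c)),
      Inv q (C1 j) Rd, Resp q (C1 j) (VI (of_bool c)),
      Inv q (R2 j) (Wr (VB True)), Resp q (R2 j) Bot]"

definition round_event :: "nat \<Rightarrow> nat \<Rightarrow> bool \<Rightarrow> nat \<Rightarrow> event" where
  "round_event m j c t =
     (if t = 0 then Inv 1 (R1 j) (Wr (VI 1))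
      else if t = 1 then Inv 0 (R1 j) (Wr (VI 0))
      else if t < m + 2 then Inv t (R1 j) Rd
      else if t < m + 6 then
        [Resp 0 (R1 j) Bot, Flip 0 c, Inv 0 (C1 j) (Wr (VI (of_bool c))), Resp 0 (C1 j) Bot]
          ! (t - (m + 2))
      else if t < 8 * m + 6 then reader_events j c ((t - (m + 6)) div 7 + 2) ! ((t - (m + 6)) mod 7)
      else
        [Resp 1 (R1 j) Bot, Inv 1 (R2 j) Rd, Resp 1 (R2 j) (VB True),
         Inv 0 (R2 j) Rd, Resp 0 (R2 j) (VB True)] ! (t - (8 * m + 6)))"

definition round_proc :: "nat \<Rightarrow> nat \<Rightarrow> nat" where
  "round_proc m t =
     (if t = 0 then 1 else if t = 1 then 0 else if t < m + 2 then t else if t < m + 6 then 0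
      else if t < 8 * m + 6 then (t - (m + 6)) div 7 + 2 else if t < 8 * m + 9 then 1 else 0)"

lemma round_offset_cases:
  assumes "t < round_len m"
  obtains (start) "t < m + 2"
    | (writer) "t \<in> {m + 2, m + 3, m + 4, m + 5}"
    | (reader) i s where "i < m" "s < 7" "t = m + 6 + 7 * i + s"
    | (finish) "t \<in> {8 * m + 6, 8 * m + 7, 8 * m + 8, 8 * m + 9, 8 * m + 10}"
proof -
  consider "t < m + 2" | "m + 2 \<le> t" "t < m + 6" | "m + 6 \<le> t" "t < 8 * m + 6" | "8 * m + 6 \<le> t"
    by linarith
  then show thesis
  proof cases
    case 2
    then have "t = m + 2 \<or> t = m + 3 \<or> t = m + 4 \<or> t = m + 5" by linarith
    then show thesis using writer by blast
  next
    case 3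
    define i s where "i = (t - (m + 6)) div 7" and "s = (t - (m + 6)) mod 7"
    have "t = m + 6 + 7 * i + s" "i < m" "s < 7"
      using 3 unfolding i_def s_def by auto
    then show thesis using reader by blast
  next
    case 4
    with assms have "t = 8 * m + 6 \<or> t = 8 * m + 7 \<or> t = 8 * m + 8 \<or> t = 8 * m + 9 \<or> t = 8 * m + 10"
      unfolding round_len_def by linarith
    then show thesis using finish by blast
  qed (rule start)
qed

lemma round_event_reader:
  "i < m \<Longrightarrow> s < 7 \<Longrightarrow> round_event m j c (m + 6 + 7 * i + s) = reader_events j c (i + 2) ! s"
  unfolding round_event_def by auto

lemma round_proc_reader: "i < m \<Longrightarrow> s < 7 \<Longrightarrow> round_proc m (m + 6 + 7 * i + s) = i + 2"
  unfolding round_proc_def by auto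

lemma proc_reader_events: "s < 7 \<Longrightarrow> proc (reader_events j c q ! s) = q"
  using nth_mem[of s "reader_events j c q"] by (auto simp: reader_events_def)

lemma proc_round_event:
  assumes "t < round_len m"
  shows "proc (round_event m j c t) = round_proc m t"
  using assms
proof (cases rule: round_offset_cases)
  case (reader i s)
  then show ?thesis
    by (simp add: round_event_reader round_proc_reader proc_reader_events)
qed (auto simp: round_event_def round_proc_def)

lemma resp_val_round_event_start: "t < m + 6 \<Longrightarrow> resp_val (round_event m j c t) = Bot"
  unfolding round_event_def by (auto simp: nth_Cons')

lemma round_len_pos: "0 < round_len m"
  by (simp add: round_len_def)

lemma round_proc_less: "t < round_len m \<Longrightarrow> round_proc m t < m + 2"
  unfolding round_proc_def round_len_def by (auto; presburger?)

lemma is_flip_round_event: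
  assumes "t < round_len m"
  shows "is_flip (round_event m j c t) \<longleftrightarrow> t = m + 3"
  using assms
proof (cases rule: round_offset_cases)
  case (reader i k)
  then show ?thesis
    using nth_mem[of k "reader_events j c (i + 2)"]
    by (auto simp: round_event_reader reader_events_def)
qed (auto simp: round_event_def)

lemma round_event_first_read: "2 \<le> q \<Longrightarrow> q < m + 2 \<Longrightarrow> round_event m j c q = Inv q (R1 j) Rd"
  by (simp add: round_event_def)

lemma round_event_reader_steps:
  assumes "i < m"
  shows "round_event m j c (m + 6 + 7 * i) = Resp (i + 2) (R1 j) (VI (of_bool c))"
    and "round_event m j c (m + 7 + 7 * i) = Inv (i + 2) (R1 j) Rd"
    and "round_event m j c (m + 8 + 7 * i) = Resp (i + 2) (R1 j) (VI (1 - of_bool c))"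
    and "round_event m j c (m + 9 + 7 * i) = Inv (i + 2) (C1 j) Rd"
    and "round_event m j c (m + 10 + 7 * i) = Resp (i + 2) (C1 j) (VI (of_bool c))"
    and "round_event m j c (m + 11 + 7 * i) = Inv (i + 2) (R2 j) (Wr (VB True))"
  using assms round_event_reader[of i m 0 j c] round_event_reader[of i m 1 j c]
    round_event_reader[of i m 2 j c] round_event_reader[of i m 3 j c]
    round_event_reader[of i m 4 j c] round_event_reader[of i m 5 j c]
  by (simp_all add: reader_events_def algebra_simps)

lemma is_inv_on_round_event:
  assumes "t < round_len m" and inv: "is_inv_on r (round_event m j c t)"
  shows "r = R1 j \<and> (t < m + 2 \<or> (\<exists>i<m. t = m + 7 + 7 * i)) \<or>
    r = C1 j \<and> (t = m + 4 \<or> (\<exists>i<m. t = m + 9 + 7 * i)) \<or>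
    r = R2 j \<and> ((\<exists>i<m. t = m + 11 + 7 * i) \<or> t = 8 * m + 7 \<or> t = 8 * m + 9)"
  using assms(1)
proof (cases rule: round_offset_cases)
  case start
  then show ?thesis using inv by (auto simp: round_event_def split: if_splits)
next
  case writer
  then show ?thesis using inv by (auto simp: round_event_def)
next
  case (reader i k)
  then have reader_inv: "is_inv_on r (reader_events j c (i + 2) ! k)"
    using inv by (simp add: round_event_reader)
  from reader consider "k = 1" | "k = 3" | "k = 5" | "k = 0 \<or> k = 2 \<or> k = 4 \<or> k = 6"
    by linarith
  then show ?thesis
  proof cases
    case 1
    with reader have "t = m + 7 + 7 * i" by simp
    with \<open>i < m\<close> show ?thesis using reader_inv 1 by (auto simp: reader_events_def)
  next
    case 2
    with reader have "t = m + 9 + 7 * i" by simp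
    with \<open>i < m\<close> show ?thesis using reader_inv 2 by (auto simp: reader_events_def)
  next
    case 3
    with reader have "t = m + 11 + 7 * i" by simp
    with \<open>i < m\<close> show ?thesis using reader_inv 3 by (auto simp: reader_events_def)
  qed (use reader_inv in \<open>auto simp: reader_events_def\<close>)
next
  case finish
  then show ?thesis using inv by (auto simp: round_event_def)
qed

definition flip_outcome :: "event \<Rightarrow> bool" where
  "flip_outcome e = (case e of Flip p b \<Rightarrow> b | _ \<Rightarrow> False)"

(* Before the coin of the current round is flipped the index below is out of range, but
   then the planned event does not depend on c (resp_val_round_event_start). *)
definition weakener_adversary :: "nat \<Rightarrow> adversary" where
  "weakener_adversary m h =
     (let j = length h div round_len m; t = length h mod round_len m;
          c = flip_outcome (h ! (j * round_len m + m + 3))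
      in (round_proc m t, resp_val (round_event m j c t)))"

definition weakener_history :: "nat \<Rightarrow> (nat \<Rightarrow> bool) \<Rightarrow> nat \<Rightarrow> event" where
  "weakener_history m cs k =
     round_event m (k div round_len m) (cs (k div round_len m)) (k mod round_len m)"

lemma weakener_history_at:
  "t < round_len m \<Longrightarrow> weakener_history m cs (j * round_len m + t) = round_event m j (cs j) t"
  by (simp add: weakener_history_def)

lemma length_filter_flip_weakener_history:
  "length (filter is_flip (map (weakener_history m cs) [0..<k])) =
     k div round_len m + (if m + 3 < k mod round_len m then 1 else 0)"
proof (induction k)
  case (Suc k)
  have "is_flip (weakener_history m cs k) \<longleftrightarrow> k mod round_len m = m + 3"
    unfolding weakener_history_def by (simp add: is_flip_round_event round_len_pos)
  moreover have "m + 3 < round_len m" by (simp add: round_len_def)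
  ultimately show ?case
    using Suc by (cases "Suc (k mod round_len m) = round_len m") (auto simp: mod_Suc div_Suc)
qed simp

lemma weakener_adversary_history:
  "weakener_adversary m (map (weakener_history m cs) [0..<k]) =
     (round_proc m (k mod round_len m), resp_val (weakener_history m cs k))"
proof -
  define j t where "j = k div round_len m" and "t = k mod round_len m"
  have k: "k = j * round_len m + t" and t: "t < round_len m"
    unfolding j_def t_def by (simp_all add: round_len_pos)
  have "resp_val (round_event m j (flip_outcome (map (weakener_history m cs) [0..<k]
            ! (j * round_len m + m + 3))) t) = resp_val (round_event m j (cs j) t)"
  proof (cases "t < m + 6")
    case True
    then show ?thesis by (simp add: resp_val_round_event_start)
  next
    case False
    then have "map (weakener_history m cs) [0..<k] ! (j * round_len m + m + 3) = Flip 0 (cs j)"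
      using k weakener_history_at[of "m + 3" m cs j]
      by (simp add: round_len_def round_event_def add.assoc)
    then show ?thesis by (simp add: flip_outcome_def)
  qed
  then show ?thesis
    using k t unfolding weakener_adversary_def j_def t_def
    by (simp add: weakener_history_def Let_def)
qed

section \<open>Local states along the run\<close>

(* Local state of process p just before the step at offset t of round j; cs j is the coin of
   round j. *)
definition round_pc :: "nat \<Rightarrow> nat \<Rightarrow> nat \<Rightarrow> pc" where
  "round_pc m p t =
     (if p = 0 then
        (if t \<le> 1 then PW1 else if t \<le> m + 2 then PW1w else if t = m + 3 then PFlip
         else if t = m + 4 then PWC else if t = m + 5 then PWCw
         else if t \<le> 8 * m + 9 then PR2 else PR2w)
      else if p = 1 then
        (if t = 0 then PW1 else if t \<le> 8 * m + 6 then PW1w else if t = 8 * m + 7 then PR2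
         else if t = 8 * m + 8 then PR2w else PW1)
      else
        (let b = m + 6 + 7 * (p - 2) in
         if t \<le> p then QR1a else if t \<le> b then QR1aw else if t = b + 1 then QR1b
         else if t = b + 2 then QR1bw else if t = b + 3 then QC else if t = b + 4 then QCw
         else if t = b + 5 then QW2 else if t = b + 6 then QW2w else QR1a))"

definition round_rnd :: "nat \<Rightarrow> nat \<Rightarrow> nat \<Rightarrow> nat \<Rightarrow> nat" where
  "round_rnd m j p t =
     (if p = 1 \<and> 8 * m + 9 \<le> t \<or> 2 \<le> p \<and> m + 13 + 7 * (p - 2) \<le> t then j + 1 else j)"

definition round_state_inv :: "nat \<Rightarrow> (nat \<Rightarrow> bool) \<Rightarrow> nat \<Rightarrow> nat \<Rightarrow> nat \<Rightarrow> lstate \<Rightarrow> bool" where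
  "round_state_inv m cs j t p s \<longleftrightarrow>
     rnd s = round_rnd m j p t \<and> pcv s = round_pc m p t \<and>
     (p = 0 \<and> t = m + 4 \<longrightarrow> cv s = VI (of_bool (cs j))) \<and>
     (2 \<le> p \<and> m + 7 + 7 * (p - 2) \<le> t \<and> t \<le> m + 10 + 7 * (p - 2) \<longrightarrow>
        u1 s = VI (of_bool (cs j))) \<and>
     (2 \<le> p \<and> m + 9 + 7 * (p - 2) \<le> t \<and> t \<le> m + 10 + 7 * (p - 2) \<longrightarrow>
        u2 s = VI (1 - of_bool (cs j)))"

lemma round_state_inv_init: "round_state_inv m cs 0 0 p (init_state p)"
  by (simp add: round_state_inv_def round_pc_def round_rnd_def init_state_def)

lemma round_state_inv_idle:
  assumes inv: "round_state_inv m cs j t p s" and "p < m + 2" and idle: "p \<noteq> round_proc m t"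
    and "t < round_len m"
  shows "if Suc t < round_len m then round_state_inv m cs j (Suc t) p s
         else round_state_inv m cs (Suc j) 0 p s"
proof -
  consider "p = 0" | "p = 1" | "2 \<le> p" by linarith
  then show ?thesis
  proof cases
    case 1
    with idle have "t = 0 \<or> 2 \<le> t \<and> t < m + 2 \<or> m + 6 \<le> t \<and> t < 8 * m + 9"
      unfolding round_proc_def by (auto split: if_splits)
    with inv 1 show ?thesis
      unfolding round_state_inv_def round_pc_def round_rnd_def round_len_def by auto
  next
    case 2
    with idle \<open>t < round_len m\<close> have "1 \<le> t \<and> t < 8 * m + 6 \<or> t = 8 * m + 9 \<or> t = 8 * m + 10"
      unfolding round_proc_def round_len_def by (auto split: if_splits)
    with inv 2 show ?thesis
      unfolding round_state_inv_def round_pc_def round_rnd_def round_len_def by auto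
  next
    case 3
    with idle \<open>p < m + 2\<close> have frame: "t \<noteq> p \<and> (t < m + 6 + 7 * (p - 2) \<or> m + 12 + 7 * (p - 2) < t)"
      unfolding round_proc_def by (auto split: if_splits; presburger)
    show ?thesis
    proof (cases "Suc t < round_len m")
      case True
      have "round_pc m p (Suc t) = round_pc m p t" "round_rnd m j p (Suc t) = round_rnd m j p t"
        using frame 3 by (auto simp: round_pc_def round_rnd_def Let_def)
      with inv 3 frame True show ?thesis
        unfolding round_state_inv_def by auto
    next
      case False
      with \<open>t < round_len m\<close> have "t = 8 * m + 10" unfolding round_len_def by simp
      with inv 3 \<open>p < m + 2\<close> show ?thesis
        unfolding round_state_inv_def round_pc_def round_rnd_def round_len_def
        by (auto simp: Let_def)
    qed
  qed
qed

lemma pstep_round_event: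
  assumes inv: "round_state_inv m cs j t p s" and "t < round_len m"
    and p: "p = round_proc m t" and coin: "t = m + 3 \<Longrightarrow> b = cs j"
    and e: "e = round_event m j (cs j) t"
  shows "fst (pstep p s (resp_val e) b) = e \<and>
    (if Suc t < round_len m then round_state_inv m cs j (Suc t) p (snd (pstep p s (resp_val e) b))
     else round_state_inv m cs (Suc j) 0 p (snd (pstep p s (resp_val e) b)))"
  using \<open>t < round_len m\<close>
proof (cases rule: round_offset_cases)
  case start
  then consider "t = 0" | "t = 1" | "2 \<le> t" "t < m + 2" by linarith
  then show ?thesis
    by cases (use assms in \<open>auto simp: round_state_inv_def round_pc_def round_rnd_def pstep_def
       round_event_def round_proc_def round_len_def\<close>)
next
  case writer
  then consider "t = m + 2" | "t = m + 3" | "t = m + 4" | "t = m + 5" by blast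
  then show ?thesis
    by cases (use assms in \<open>auto simp: round_state_inv_def round_pc_def round_rnd_def pstep_def
       round_event_def round_proc_def round_len_def of_bool_def\<close>)
next
  case (reader i k)
  have facts: "p = i + 2" "e = reader_events j (cs j) (i + 2) ! k" "Suc t < round_len m"
    using reader p e by (auto simp: round_event_reader round_proc_reader round_len_def)
  from reader consider "k = 0" | "k = 1" | "k = 2" | "k = 3" | "k = 4" | "k = 5" | "k = 6"
    by linarith
  then show ?thesis
    by cases (use inv reader facts in \<open>auto simp: round_state_inv_def round_pc_def round_rnd_def
        pstep_def reader_events_def of_bool_def Let_def\<close>)
next
  case finish
  then consider "t = 8 * m + 6" | "t = 8 * m + 7" | "t = 8 * m + 8" | "t = 8 * m + 9"
    | "t = 8 * m + 10" by blast
  then show ?thesis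
    by cases (use assms in \<open>auto simp: round_state_inv_def round_pc_def round_rnd_def pstep_def
       round_event_def round_proc_def round_len_def of_bool_def\<close>)
qed

lemma run_weakener_adversary:
  "snd (run (weakener_adversary m) cs k) = map (weakener_history m cs) [0..<k] \<and>
    (\<forall>p < m + 2. round_state_inv m cs (k div round_len m) (k mod round_len m) p
                   (fst (run (weakener_adversary m) cs k) p))"
proof (induction k)
  case 0
  show ?case by (simp add: round_state_inv_init)
next
  case (Suc k)
  obtain st h where run: "run (weakener_adversary m) cs k = (st, h)" by fastforce
  define j t where "j = k div round_len m" and "t = k mod round_len m"
  have k: "k = j * round_len m + t" and t: "t < round_len m"
    unfolding j_def t_def by (simp_all add: round_len_pos)
  have h: "h = map (weakener_history m cs) [0..<k]"
    and inv: "\<forall>p < m + 2. round_state_inv m cs j t p (st p)"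
    using Suc run unfolding j_def t_def by auto
  define p e b where "p = round_proc m t" and "e = round_event m j (cs j) t"
    and "b = cs (length (filter is_flip h))"
  have p: "p < m + 2" using t unfolding p_def by (rule round_proc_less)
  have coin: "t = m + 3 \<Longrightarrow> b = cs j"
    unfolding b_def h length_filter_flip_weakener_history j_def t_def by simp
  define s' where "s' = snd (pstep p (st p) (resp_val e) b)"
  have step: "pstep p (st p) (resp_val e) b = (e, s')"
    and s': "if Suc t < round_len m then round_state_inv m cs j (Suc t) p s'
             else round_state_inv m cs (Suc j) 0 p s'"
    using pstep_round_event[OF inv[rule_format, OF p] t p_def coin e_def]
    unfolding s'_def by (simp_all add: prod_eq_iff)
  have e: "weakener_history m cs k = e"
    using k t weakener_history_at unfolding e_def by simp
  have "run (weakener_adversary m) cs (Suc k) = (st(p := s'), h @ [e])"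
    using run step weakener_adversary_history[of m cs k] h e unfolding p_def t_def b_def by simp
  moreover have "\<forall>q < m + 2.
      if Suc t < round_len m then round_state_inv m cs j (Suc t) q ((st(p := s')) q)
      else round_state_inv m cs (Suc j) 0 q ((st(p := s')) q)"
    using s' inv round_state_inv_idle[OF _ _ _ t] unfolding p_def by auto
  moreover have "Suc k div round_len m = (if Suc t < round_len m then j else Suc j)"
    "Suc k mod round_len m = (if Suc t < round_len m then Suc t else 0)"
    using t unfolding j_def t_def by (auto simp: mod_Suc div_Suc)
  ultimately show ?case using h e by auto
qed

section \<open>Linearizing the registers\<close>

definition resp_offset :: "nat \<Rightarrow> nat \<Rightarrow> nat" where
  "resp_offset m t =
     (if t = 0 then 8 * m + 6 else if t = 1 then m + 2 else if t < m + 2 then m + 6 + 7 * (t - 2)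
      else t + 1)"

lemma round_event_first_read_resp:
  "2 \<le> q \<Longrightarrow> q < m + 2 \<Longrightarrow> round_event m j c (resp_offset m q) = Resp q (R1 j) (VI (of_bool c))"
  using round_event_reader_steps(1)[of "q - 2" m j c] by (simp add: resp_offset_def)

lemma resp_offset_round_event:
  assumes "t < round_len m" and inv: "round_event m j c t = Inv p r op"
  shows "t < resp_offset m t \<and> resp_offset m t < round_len m \<and>
    (\<exists>v. round_event m j c (resp_offset m t) = Resp p r v) \<and>
    (\<forall>t'. t < t' \<and> t' < resp_offset m t \<longrightarrow> round_proc m t' \<noteq> p)"
  using assms(1)
proof (cases rule: round_offset_cases)
  case start
  then consider "t = 0" | "t = 1" | "2 \<le> t" by linarith
  then show ?thesis
  proof cases
    case 3
    with start have "round_event m j c (resp_offset m t) = Resp t (R1 j) (VI (of_bool c))"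
      by (simp add: round_event_first_read_resp)
    moreover have "\<forall>t'. t < t' \<and> t' < resp_offset m t \<longrightarrow> round_proc m t' \<noteq> t"
      using 3 start unfolding resp_offset_def round_proc_def by (auto; presburger)
    ultimately show ?thesis
      using 3 start inv unfolding resp_offset_def round_event_def round_len_def by auto
  qed (use inv in \<open>auto simp: resp_offset_def round_event_def round_proc_def round_len_def\<close>)
next
  case writer
  then consider "t = m + 2" | "t = m + 3" | "t = m + 4" | "t = m + 5" by blast
  then show ?thesis
    by cases (use inv in \<open>auto simp: resp_offset_def round_event_def round_proc_def round_len_def\<close>)
next
  case (reader i k)
  have ev: "round_event m j c t = reader_events j c (i + 2) ! k"
    and ev_next: "k < 6 \<Longrightarrow> round_event m j c (Suc t) = reader_events j c (i + 2) ! Suc k"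
    using reader round_event_reader[of i m "Suc k" j c] by (simp_all add: round_event_reader)
  have "resp_offset m t = Suc t" "Suc t < round_len m"
    using reader unfolding resp_offset_def round_len_def by auto
  moreover from reader consider "k = 0" | "k = 1" | "k = 2" | "k = 3" | "k = 4" | "k = 5" | "k = 6"
    by linarith
  then have "k < 6 \<and> (\<exists>v. reader_events j c (i + 2) ! Suc k = Resp p r v)"
    by cases (use inv ev in \<open>auto simp: reader_events_def\<close>)
  ultimately show ?thesis using ev_next by auto
next
  case finish
  then consider "t = 8 * m + 6" | "t = 8 * m + 7" | "t = 8 * m + 8" | "t = 8 * m + 9"
    | "t = 8 * m + 10" by blast
  then show ?thesis
    by cases (use inv in \<open>auto simp: resp_offset_def round_event_def round_proc_def round_len_def\<close>)
qed

definition resp_index :: "nat \<Rightarrow> nat \<Rightarrow> nat" where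
  "resp_index m k = k div round_len m * round_len m + resp_offset m (k mod round_len m)"

lemma resp_index_at:
  "t < round_len m \<Longrightarrow> resp_index m (j * round_len m + t) = j * round_len m + resp_offset m t"
  by (simp add: resp_index_def)

lemma matches_weakener_history:
  assumes "is_inv_on r (weakener_history m cs a)"
    and "matches (map (weakener_history m cs) [0..<k]) a y"
  shows "y = resp_index m a"
proof -
  define j t where "j = a div round_len m" and "t = a mod round_len m"
  have a: "a = j * round_len m + t" and t: "t < round_len m"
    unfolding j_def t_def by (simp_all add: round_len_pos)
  obtain p op where "round_event m j (cs j) t = Inv p r op"
    using is_inv_onD[OF assms(1)] unfolding weakener_history_def j_def t_def by blast
  note resp = resp_offset_round_event[OF t this]
  have proc_at: "proc (weakener_history m cs (j * round_len m + t')) = round_proc m t'"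
    if "t' < round_len m" for t'
    using that by (simp add: weakener_history_at proc_round_event)
  have ri: "resp_index m a = j * round_len m + resp_offset m t"
    using a t resp_index_at by simp
  show ?thesis
  proof (rule matches_eq_next_step[OF assms(2)])
    show "a < resp_index m a" using ri a resp by simp
    have "proc (weakener_history m cs a) = p"
      using a t \<open>round_event m j (cs j) t = Inv p r op\<close> by (simp add: weakener_history_at)
    moreover have "proc (weakener_history m cs (resp_index m a)) = p"
      using ri resp by (auto simp: weakener_history_at)
    moreover have "proc (weakener_history m cs x) \<noteq> p" if "a < x" "x < resp_index m a" for x
    proof -
      have "x = j * round_len m + (x - j * round_len m)" "t < x - j * round_len m"
        "x - j * round_len m < resp_offset m t"
        using that a ri by auto
      then show ?thesis using resp proc_at[of "x - j * round_len m"] by (metis order.strict_trans)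
    qed
    ultimately show "proc (weakener_history m cs (resp_index m a)) = proc (weakener_history m cs a)"
      and "\<forall>x. a < x \<and> x < resp_index m a \<longrightarrow>
        proc (weakener_history m cs x) \<noteq> proc (weakener_history m cs a)"
      by auto
  qed
qed

lemma linearizable_weakener_history:
  assumes "distinct L"
    and round: "\<forall>t\<in>set L. t < round_len m \<and> is_inv_on r (round_event m j (cs j) t)"
    and complete: "\<forall>j' c t. t < round_len m \<longrightarrow> is_inv_on r (round_event m j' c t) \<longrightarrow>
      j' = j \<and> t \<in> set L"
    and sorted: "sorted_wrt (\<lambda>u w. u < resp_offset m w) L"
    and legal: "legal_order (round_event m j (cs j)) (resp_offset m) v0 L"
  shows "linearizable_reg (map (weakener_history m cs) [0..<k]) r v0"
proof -
  define shift where "shift t = j * round_len m + t" for t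
  have resp: "t < resp_offset m t \<and> resp_offset m t < round_len m" if "t \<in> set L" for t
    using round that resp_offset_round_event by (metis is_inv_onD)
  have at: "weakener_history m cs (shift t) = round_event m j (cs j) t" if "t < round_len m" for t
    using that unfolding shift_def by (rule weakener_history_at)
  have resp_shift: "resp_index m (shift t) = shift (resp_offset m t)" if "t \<in> set L" for t
    using that round resp_index_at unfolding shift_def by simp
  show ?thesis
  proof (rule linearizable_reg_prefixI[where L = "map shift L" and resp = "resp_index m"])
    show "distinct (map shift L)"
      using \<open>distinct L\<close> by (simp add: distinct_map inj_on_def shift_def)
    show "\<forall>i\<in>set (map shift L). is_inv_on r (weakener_history m cs i)" using round at by auto
    show "\<forall>i. is_inv_on r (weakener_history m cs i) \<longrightarrow> i \<in> set (map shift L)"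
    proof (intro allI impI)
      fix i assume "is_inv_on r (weakener_history m cs i)"
      moreover have "i mod round_len m < round_len m" by (simp add: round_len_pos)
      ultimately have "i div round_len m = j" "i mod round_len m \<in> set L"
        using complete unfolding weakener_history_def by blast+
      then show "i \<in> set (map shift L)"
        unfolding shift_def by (metis div_mult_mod_eq image_eqI set_map)
    qed
    show "sorted_wrt (\<lambda>u w. u < resp_index m w) (map shift L)"
      unfolding sorted_wrt_map using sorted
      by (rule sorted_wrt_mono_rel[rotated]) (simp add: resp_shift, simp add: shift_def)
    show "\<forall>w\<in>set (map shift L). w < resp_index m w"
      using resp resp_shift by (auto simp: shift_def)
    show "\<forall>a\<in>set (map shift L). \<forall>y. matches (map (weakener_history m cs) [0..<k]) a y \<longrightarrow>
        y = resp_index m a"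
    proof (intro ballI allI impI)
      fix a y assume a: "a \<in> set (map shift L)"
        and "matches (map (weakener_history m cs) [0..<k]) a y"
      moreover from a have "is_inv_on r (weakener_history m cs a)" using round at by auto
      ultimately show "y = resp_index m a" by (blast intro: matches_weakener_history)
    qed
    show "legal_order (weakener_history m cs) (resp_index m) v0 (map shift L)"
      using legal round resp at resp_shift by (subst legal_order_map) auto
  qed
qed

lemma linearizable_R1:
  "linearizable_reg (map (weakener_history m cs) [0..<k]) (R1 j) Bot"
proof -
  define c where "c = cs j"
  define w_c w_not_c
    where "w_c = (if c then 0 else 1 :: nat)" and "w_not_c = (if c then 1 else 0 :: nat)"
  define first_reads second_reads
    where "first_reads = [2..<m + 2]" and "second_reads = map (\<lambda>i. m + 7 + 7 * i) [0..<m]"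
  \<comment> \<open>Chosen after seeing the coin: this is the order strong linearizability would forbid.\<close>
  define L where "L = ([w_c] @ first_reads) @ ([w_not_c] @ second_reads)"
  have writes: "round_event m j c w_c = Inv (1 - w_c) (R1 j) (Wr (VI (of_bool c)))"
    "round_event m j c w_not_c = Inv (1 - w_not_c) (R1 j) (Wr (VI (1 - of_bool c)))"
    unfolding w_c_def w_not_c_def by (simp_all add: round_event_def)
  have second: "is_read_inv (round_event m j c t) \<and>
      resp_val (round_event m j c (resp_offset m t)) = VI (1 - of_bool c)"
    if "t \<in> set second_reads" for t
  proof -
    from that obtain i where "i < m" "t = m + 7 + 7 * i" unfolding second_reads_def by auto
    moreover from this have "resp_offset m t = m + 8 + 7 * i" by (simp add: resp_offset_def)
    ultimately show ?thesis using round_event_reader_steps(2,3)[of i m j c] by simp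
  qed
  have early: "u < m + 2" if "u \<in> set ([w_c] @ first_reads @ [w_not_c])" for u
    using that unfolding w_c_def w_not_c_def first_reads_def by auto
  have late: "m + 2 \<le> resp_offset m w" for w
    by (simp add: resp_offset_def)
  show ?thesis
  proof (rule linearizable_weakener_history[where L = L])
    show "distinct L"
      unfolding L_def w_c_def w_not_c_def first_reads_def second_reads_def
      by (auto simp: distinct_map inj_on_def)
    show "\<forall>t\<in>set L. t < round_len m \<and> is_inv_on (R1 j) (round_event m j (cs j) t)"
      using writes round_event_first_read round_event_reader_steps(2)
      unfolding L_def c_def first_reads_def second_reads_def
      by (auto simp: round_len_def w_c_def w_not_c_def)
    show "\<forall>j' c t. t < round_len m \<longrightarrow> is_inv_on (R1 j) (round_event m j' c t) \<longrightarrow>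
        j' = j \<and> t \<in> set L"
      using is_inv_on_round_event
      unfolding L_def first_reads_def second_reads_def w_c_def w_not_c_def by fastforce
    show "sorted_wrt (\<lambda>u w. u < resp_offset m w) L"
    proof -
      have "sorted_wrt (\<lambda>u w. u < resp_offset m w) ([w_c] @ first_reads @ [w_not_c])"
        using early late by (intro sorted_wrt_mono_rel[OF _ sorted_wrt_true]) (meson less_le_trans)
      moreover have "sorted_wrt (\<lambda>u w. u < resp_offset m w) second_reads"
        unfolding second_reads_def sorted_wrt_map
        by (rule sorted_wrt_mono_rel[OF _ sorted_wrt_upt]) (simp add: resp_offset_def)
      ultimately show ?thesis
        using early late unfolding L_def by (auto simp: sorted_wrt_append intro: less_le_trans)
    qed
    show "legal_order (round_event m j (cs j)) (resp_offset m) Bot L"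
      unfolding L_def
    proof (rule legal_order_append)
      show "legal_order (round_event m j (cs j)) (resp_offset m) Bot ([w_c] @ first_reads)"
        using writes round_event_first_read round_event_first_read_resp
        unfolding c_def first_reads_def by (intro legal_order_write_reads) auto
      show "legal_order (round_event m j (cs j)) (resp_offset m)
          (val_after (round_event m j (cs j)) Bot ([w_c] @ first_reads)) ([w_not_c] @ second_reads)"
        using writes second unfolding c_def by (intro legal_order_write_reads) auto
    qed
  qed
qed

lemma linearizable_C1:
  "linearizable_reg (map (weakener_history m cs) [0..<k]) (C1 j) (VI (-1))"
proof -
  define c where "c = cs j"
  define reads where "reads = map (\<lambda>i. m + 9 + 7 * i) [0..<m]"
  have coin_write: "round_event m j c (m + 4) = Inv 0 (C1 j) (Wr (VI (of_bool c)))"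
    by (simp add: round_event_def)
  have read: "is_inv_on (C1 j) (round_event m j c t) \<and> is_read_inv (round_event m j c t) \<and>
      resp_val (round_event m j c (resp_offset m t)) = VI (of_bool c)" if "t \<in> set reads" for t
  proof -
    from that obtain i where "i < m" "t = m + 9 + 7 * i" unfolding reads_def by auto
    moreover from this have "resp_offset m t = m + 10 + 7 * i" by (simp add: resp_offset_def)
    ultimately show ?thesis using round_event_reader_steps(4,5)[of i m j c] by simp
  qed
  show ?thesis
  proof (rule linearizable_weakener_history[where L = "[m + 4] @ reads"])
    show "distinct ([m + 4] @ reads)" unfolding reads_def by (auto simp: distinct_map inj_on_def)
    show "\<forall>t\<in>set ([m + 4] @ reads). t < round_len m \<and> is_inv_on (C1 j) (round_event m j (cs j) t)"
      using coin_write read unfolding c_def by (auto simp: reads_def round_len_def)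
    show "\<forall>j' c t. t < round_len m \<longrightarrow> is_inv_on (C1 j) (round_event m j' c t) \<longrightarrow>
        j' = j \<and> t \<in> set ([m + 4] @ reads)"
      using is_inv_on_round_event unfolding reads_def by fastforce
    show "sorted_wrt (\<lambda>u w. u < resp_offset m w) ([m + 4] @ reads)"
      unfolding reads_def
      by (auto simp: sorted_wrt_append sorted_wrt_map resp_offset_def
          intro: sorted_wrt_mono_rel[OF _ sorted_wrt_upt])
    show "legal_order (round_event m j (cs j)) (resp_offset m) (VI (-1)) ([m + 4] @ reads)"
      using coin_write read unfolding c_def by (intro legal_order_write_reads) auto
  qed
qed

lemma linearizable_R2:
  assumes "1 \<le> m"
  shows "linearizable_reg (map (weakener_history m cs) [0..<k]) (R2 j) (VB False)"
proof -
  define c where "c = cs j"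
  define writes where "writes = map (\<lambda>i. m + 11 + 7 * i) [0..<m]"
  have write_true: "\<exists>p. round_event m j c t = Inv p (R2 j) (Wr (VB True))" if "t \<in> set writes" for t
    using that round_event_reader_steps(6) unfolding writes_def by auto
  have "writes \<noteq> []" using \<open>1 \<le> m\<close> by (simp add: writes_def)
  have reads: "round_event m j c (8 * m + 7) = Inv 1 (R2 j) Rd"
    "round_event m j c (8 * m + 9) = Inv 0 (R2 j) Rd"
    "round_event m j c (resp_offset m (8 * m + 7)) = Resp 1 (R2 j) (VB True)"
    "round_event m j c (resp_offset m (8 * m + 9)) = Resp 0 (R2 j) (VB True)"
    by (simp_all add: round_event_def resp_offset_def)
  show ?thesis
  proof (rule linearizable_weakener_history[where L = "writes @ [8 * m + 7, 8 * m + 9]"])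
    show "distinct (writes @ [8 * m + 7, 8 * m + 9])"
      unfolding writes_def by (auto simp: distinct_map inj_on_def) presburger+
    show "\<forall>t\<in>set (writes @ [8 * m + 7, 8 * m + 9]).
        t < round_len m \<and> is_inv_on (R2 j) (round_event m j (cs j) t)"
    proof
      fix t assume t: "t \<in> set (writes @ [8 * m + 7, 8 * m + 9])"
      then have "t < round_len m" by (auto simp: writes_def round_len_def)
      moreover have "is_inv_on (R2 j) (round_event m j (cs j) t)"
        using t write_true[of t] reads unfolding c_def by auto
      ultimately show "t < round_len m \<and> is_inv_on (R2 j) (round_event m j (cs j) t)" by simp
    qed
    show "\<forall>j' c t. t < round_len m \<longrightarrow> is_inv_on (R2 j) (round_event m j' c t) \<longrightarrow>
        j' = j \<and> t \<in> set (writes @ [8 * m + 7, 8 * m + 9])"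
      using is_inv_on_round_event unfolding writes_def by fastforce
    show "sorted_wrt (\<lambda>u w. u < resp_offset m w) (writes @ [8 * m + 7, 8 * m + 9])"
      unfolding writes_def
      by (auto simp: sorted_wrt_append sorted_wrt_map resp_offset_def
          intro: sorted_wrt_mono_rel[OF _ sorted_wrt_upt])
    show "legal_order (round_event m j (cs j)) (resp_offset m) (VB False)
        (writes @ [8 * m + 7, 8 * m + 9])"
      using write_true reads \<open>writes \<noteq> []\<close> unfolding c_def
      by (intro legal_order_write_reads) (auto, blast)
  qed
qed

theorem theorem1:
  fixes n :: nat
  assumes "n \<ge> 3"
  shows "\<exists>\<sigma> :: adversary. (\<forall>h. fst (\<sigma> h) < n) \<and>
    (\<forall>cs :: nat \<Rightarrow> bool.
       (\<forall>k r. linearizable_reg (snd (run \<sigma> cs k)) r (init_val r)) \<and>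
       (\<forall>p < n. \<forall>j. \<exists>k. j \<le> rnd (fst (run \<sigma> cs k) p)))"
proof -
  define m where "m = n - 2"
  have "1 \<le> m" and n: "n = m + 2" using assms unfolding m_def by auto
  note run = run_weakener_adversary[of m]
  show ?thesis
  proof (intro exI[of _ "weakener_adversary m"] conjI allI impI)
    fix h :: "event list"
    show "fst (weakener_adversary m h) < n"
      using round_proc_less[of "length h mod round_len m" m] round_len_pos[of m]
      unfolding weakener_adversary_def n by (simp add: Let_def)
  next
    fix cs :: "nat \<Rightarrow> bool" and k r
    show "linearizable_reg (snd (run (weakener_adversary m) cs k)) r (init_val r)"
      using run[of cs k] linearizable_R1 linearizable_C1 linearizable_R2[OF \<open>1 \<le> m\<close>]
      by (cases r) auto
  next
    fix cs :: "nat \<Rightarrow> bool" and p j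
    assume "p < n"
    then have "round_state_inv m cs j 0 p (fst (run (weakener_adversary m) cs (j * round_len m)) p)"
      using run[of cs "j * round_len m"] n by (simp add: round_len_pos)
    then have "rnd (fst (run (weakener_adversary m) cs (j * round_len m)) p) = j"
      by (simp add: round_state_inv_def round_rnd_def)
    then show "\<exists>k. j \<le> rnd (fst (run (weakener_adversary m) cs k) p)" by (metis order_refl)
  qed
qed

end
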